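(* Let $a_1,\dots,a_{12},b_1,\dots,b_{12}\in\mathbb{C}^6$ be row vectors of length 6 such that the three $12\times12$ matrices $M$ with rows $(a_k\,|\,b_k)$, $k=1,\dots,12$; $M_R$ with rows, in order, $(a_1|a_2),(b_1|b_2),(a_3|a_4),(b_3|b_4),(a_5|a_6),(b_5|b_6),(a_7|a_8),(b_7|b_8),(a_9|a_{10}),(b_9|b_{10}),(a_{11}|a_{12}),(b_{11}|b_{12})$; $M_\Gamma$ with rows, in order, $(a_1|a_3),(a_2|a_4),(b_1|b_3),(b_2|b_4),(a_5|a_7),(a_6|a_8),(b_5|b_7),(b_6|b_8),(a_9|a_{11}),(a_{10}|a_{12}),(b_9|b_{11}),(b_{10}|b_{12})$ are all unitary (here $(x|y)$ denotes the concatenation of two length-6 vectors into a length-12 row). Define further vectors by, for $k=1,\dots,4$: $c_{4+k}=a_k,\ d_{4+k}=b_k,\ e_{8+k}=a_k,\ f_{8+k}=b_k$; $c_{8+k}=a_{4+k},\ d_{8+k}=b_{4+k},\ e_k=a_{4+k},\ f_k=b_{4+k}$; $c_k=a_{8+k},\ d_k=b_{8+k},\ e_{4+k}=a_{8+k},\ f_{4+k}=b_{8+k}$. Let $U$ be the $36\times36$ matrix each of whose rows is split into six consecutive column blocks of length 6, where every row has exactly two possibly nonzero adjacent column blocks and all other entries zero, specified as follows (a pair $xy$ placed in column blocks $(p,p+1)$): rows 1–2: $a_1b_1,a_2b_2$ in blocks (1,2); rows 3–4: $c_1d_1,c_2d_2$ in (3,4); rows 5–6: $e_1f_1,e_2f_2$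 in (5,6); rows 7–8: $a_3b_3,a_4b_4$ in (1,2); rows 9–10: $c_3d_3,c_4d_4$ in (3,4); rows 11–14: $e_3f_3,e_4f_4,e_5f_5,e_6f_6$ in (5,6); rows 15–16: $a_5b_5,a_6b_6$ in (1,2); rows 17–18: $c_5d_5,c_6d_6$ in (3,4); rows 19–20: $e_7f_7,e_8f_8$ in (5,6); rows 21–22: $a_7b_7,a_8b_8$ in (1,2); rows 23–26: $c_7d_7,c_8d_8,c_9d_9,c_{10}d_{10}$ in (3,4); rows 27–28: $e_9f_9,e_{10}f_{10}$ in (5,6); rows 29–30: $a_9b_9,a_{10}b_{10}$ in (1,2); rows 31–32: $c_{11}d_{11},c_{12}d_{12}$ in (3,4); rows 33–34: $e_{11}f_{11},e_{12}f_{12}$ in (5,6); rows 35–36: $a_{11}b_{11},a_{12}b_{12}$ in (1,2). Then $U$ is a multiunitary matrix of size 36.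
   Context: Index rows and columns of a $36\times36$ matrix by pairs $(i,j)$, $i,j\in\{1,\dots,6\}$, with $(i,j)\mapsto 6(i-1)+j$. The reshuffling of $M$ is $M^R_{(i,j),(k,l)}=M_{(i,k),(j,l)}$ and the partial transpose is $M^\Gamma_{(i,j),(k,l)}=M_{(i,l),(k,j)}$. A matrix $U$ of size 36 is multiunitary if $U$, $U^R$ and $U^\Gamma$ are all unitary. *)

theory Defs
  imports "Jordan_Normal_Form.Matrix"
begin

definition adj :: "complex mat \<Rightarrow> complex mat" where
  "adj A = mat (dim_col A) (dim_row A) (\<lambda>(i,j). cnj (A $$ (j,i)))"

definition unitary_mat :: "nat \<Rightarrow> complex mat \<Rightarrow> bool" where
  "unitary_mat n A \<longleftrightarrow> A \<in> carrier_mat n n \<and> A * adj A = 1\<^sub>m n \<and> adj A * A = 1\<^sub>m n"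

(* Row/column (i,j), i,j in {1..6}, has 1-based index 6(i-1)+j, i.e. 0-based index
   6*(i-1)+(j-1).  For a 0-based index r: i-1 = r div 6, j-1 = r mod 6. *)
definition reshuffle :: "complex mat \<Rightarrow> complex mat" where
  "reshuffle M = mat 36 36 (\<lambda>(r,c). M $$ (6 * (r div 6) + c div 6, 6 * (r mod 6) + c mod 6))"

definition partial_transpose :: "complex mat \<Rightarrow> complex mat" where
  "partial_transpose M = mat 36 36 (\<lambda>(r,c). M $$ (6 * (r div 6) + c mod 6, 6 * (c div 6) + r mod 6))"

definition multiunitary36 :: "complex mat \<Rightarrow> bool" where
  "multiunitary36 U \<longleftrightarrow> unitary_mat 36 U \<and> unitary_mat 36 (reshuffle U) \<and> unitary_mat 36 (partial_transpose U)"

(* Vectors of length 6 are functions nat => complex with components indexed 1..6.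
   A family a_1..a_12 is a :: nat => nat => complex, a k j = j-th component of a_k. *)
type_synonym cvec = "nat \<Rightarrow> complex"

definition catrow :: "cvec \<Rightarrow> cvec \<Rightarrow> nat \<Rightarrow> complex" where
  "catrow x y = (\<lambda>c. if c < 6 then x (c + 1) else y (c - 5))"

definition mat12_of_rows :: "(nat \<Rightarrow> complex) list \<Rightarrow> complex mat" where
  "mat12_of_rows rs = mat 12 12 (\<lambda>(r,c). (rs ! r) c)"

definition M_mat :: "(nat \<Rightarrow> cvec) \<Rightarrow> (nat \<Rightarrow> cvec) \<Rightarrow> complex mat" where
  "M_mat a b = mat12_of_rows (map (\<lambda>k. catrow (a k) (b k)) [1..<13])"

definition MR_mat :: "(nat \<Rightarrow> cvec) \<Rightarrow> (nat \<Rightarrow> cvec) \<Rightarrow> complex mat" where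
  "MR_mat a b = mat12_of_rows
     [catrow (a 1) (a 2), catrow (b 1) (b 2), catrow (a 3) (a 4), catrow (b 3) (b 4),
      catrow (a 5) (a 6), catrow (b 5) (b 6), catrow (a 7) (a 8), catrow (b 7) (b 8),
      catrow (a 9) (a 10), catrow (b 9) (b 10), catrow (a 11) (a 12), catrow (b 11) (b 12)]"

definition MG_mat :: "(nat \<Rightarrow> cvec) \<Rightarrow> (nat \<Rightarrow> cvec) \<Rightarrow> complex mat" where
  "MG_mat a b = mat12_of_rows
     [catrow (a 1) (a 3), catrow (a 2) (a 4), catrow (b 1) (b 3), catrow (b 2) (b 4),
      catrow (a 5) (a 7), catrow (a 6) (a 8), catrow (b 5) (b 7), catrow (b 6) (b 8),
      catrow (a 9) (a 11), catrow (a 10) (a 12), catrow (b 9) (b 11), catrow (b 10) (b 12)]"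

(* c,d,e,f (indices 1..12), as in the paper, for k = 1..4:
   c_{4+k}=a_k, c_{8+k}=a_{4+k}, c_k=a_{8+k}; e_{8+k}=a_k, e_k=a_{4+k}, e_{4+k}=a_{8+k};
   d, f likewise with b. *)
definition shiftC :: "(nat \<Rightarrow> cvec) \<Rightarrow> nat \<Rightarrow> cvec" where
  "shiftC a m = (if m \<le> 4 then a (m + 8) else a (m - 4))"

definition shiftE :: "(nat \<Rightarrow> cvec) \<Rightarrow> nat \<Rightarrow> cvec" where
  "shiftE a m = (if m \<le> 8 then a (m + 4) else a (m - 8))"

(* Each row: (p, x, y) meaning x in column block p, y in column block p+1 (blocks 1..6). *)
definition U_rows :: "(nat \<Rightarrow> cvec) \<Rightarrow> (nat \<Rightarrow> cvec) \<Rightarrow> (nat \<times> cvec \<times> cvec) list" where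
  "U_rows a b = (let c = shiftC a; d = shiftC b; e = shiftE a; f = shiftE b in
     [(1, a 1, b 1), (1, a 2, b 2),
      (3, c 1, d 1), (3, c 2, d 2),
      (5, e 1, f 1), (5, e 2, f 2),
      (1, a 3, b 3), (1, a 4, b 4),
      (3, c 3, d 3), (3, c 4, d 4),
      (5, e 3, f 3), (5, e 4, f 4), (5, e 5, f 5), (5, e 6, f 6),
      (1, a 5, b 5), (1, a 6, b 6),
      (3, c 5, d 5), (3, c 6, d 6),
      (5, e 7, f 7), (5, e 8, f 8),
      (1, a 7, b 7), (1, a 8, b 8),
      (3, c 7, d 7), (3, c 8, d 8), (3, c 9, d 9), (3, c 10, d 10),
      (5, e 9, f 9), (5, e 10, f 10),
      (1, a 9, b 9), (1, a 10, b 10),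
      (3, c 11, d 11), (3, c 12, d 12),
      (5, e 11, f 11), (5, e 12, f 12),
      (1, a 11, b 11), (1, a 12, b 12)])"

definition U_mat :: "(nat \<Rightarrow> cvec) \<Rightarrow> (nat \<Rightarrow> cvec) \<Rightarrow> complex mat" where
  "U_mat a b = mat 36 36 (\<lambda>(r,col).
     (case U_rows a b ! r of (p, x, y) \<Rightarrow>
        if col div 6 + 1 = p then x (col mod 6 + 1)
        else if col div 6 + 1 = p + 1 then y (col mod 6 + 1)
        else 0))"

end

theory Submission
  imports Defs "Jordan_Normal_Form.Determinant"
begin

text \<open>Each row of \<open>U\<close> is a row \<open>(a\<^sub>k|b\<^sub>k)\<close> of \<open>M\<close>, padded with zeros into one of three
  pairs of adjacent column blocks, and every combination of block pair and row of \<open>M\<close> occurs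
  exactly once; so rows of \<open>U\<close> in different block pairs are orthogonal and the others have
  the inner products of the rows of \<open>M\<close>. Reshuffling moves the entries of \<open>U\<close> so that each
  row of \<open>U\<^sup>R\<close> is, in the same way, a padded row of \<open>M\<^sub>R\<close>. The rows of \<open>U\<^sup>\<Gamma>\<close> have no such
  shape, but the inner product of two of them either vanishes or equals the inner product of
  two columns of \<open>M\<^sub>\<Gamma>\<close>.\<close>

lemma mult_adj_index:
  assumes "A \<in> carrier_mat n n" "i < n" "j < n"
  shows "(A * adj A) $$ (i, j) = (\<Sum>c<n. A $$ (i, c) * cnj (A $$ (j, c)))"
  using assms by (simp add: adj_def scalar_prod_def lessThan_atLeast0 row_def col_def)

lemma adj_mult_index:
  assumes "A \<in> carrier_mat n n" "i < n" "j < n"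
  shows "(adj A * A) $$ (i, j) = (\<Sum>k<n. cnj (A $$ (k, i)) * A $$ (k, j))"
  using assms by (simp add: adj_def scalar_prod_def lessThan_atLeast0 row_def col_def)

lemma unitary_matI:
  assumes "A \<in> carrier_mat n n" "A * adj A = 1\<^sub>m n"
  shows "unitary_mat n A"
proof -
  have "adj A \<in> carrier_mat n n" using assms(1) by (simp add: adj_def)
  then show ?thesis using assms mat_mult_left_right_inverse unfolding unitary_mat_def by blast
qed

lemma unitary_mat_of_gram_pullback:
  assumes A: "A \<in> carrier_mat n n"
    and G: "\<And>i j. i < m \<Longrightarrow> j < m \<Longrightarrow> G i j = (if i = j then 1 else 0)"
    and \<sigma>: "\<And>r. r < n \<Longrightarrow> \<sigma> r < m"
    and inj: "inj_on (\<lambda>r. (\<tau> r, \<sigma> r)) {..<n}"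
    and gram: "\<And>r s. r < n \<Longrightarrow> s < n \<Longrightarrow>
      (A * adj A) $$ (r, s) = (if \<tau> r = \<tau> s then G (\<sigma> r) (\<sigma> s) else 0)"
  shows "unitary_mat n A"
proof (rule unitary_matI[OF A], rule eq_matI)
  fix r s assume "r < dim_row (1\<^sub>m n)" "s < dim_col (1\<^sub>m n)"
  then have rs: "r < n" "s < n" by auto
  have "(\<tau> r = \<tau> s \<and> \<sigma> r = \<sigma> s) \<longleftrightarrow> r = s"
    using inj_onD[OF inj] rs by auto
  then show "(A * adj A) $$ (r, s) = 1\<^sub>m n $$ (r, s)"
    using gram[OF rs] G[OF \<sigma> \<sigma>] rs by auto
qed (use A in \<open>auto simp: adj_def\<close>)

lemma unitary_mat_mult_adj:
  "unitary_mat n A \<Longrightarrow> i < n \<Longrightarrow> j < n \<Longrightarrow> (A * adj A) $$ (i, j) = (if i = j then 1 else 0)"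
  by (simp add: unitary_mat_def)

lemma unitary_mat_adj_mult:
  "unitary_mat n A \<Longrightarrow> i < n \<Longrightarrow> j < n \<Longrightarrow> (adj A * A) $$ (i, j) = (if i = j then 1 else 0)"
  by (simp add: unitary_mat_def)

lemma sum_lessThan_mult:
  fixes f :: "nat \<Rightarrow> 'a::comm_monoid_add"
  shows "(\<Sum>c<m*n. f c) = (\<Sum>J<m. \<Sum>L<n. f (n*J+L))"
proof -
  have "(\<Sum>c\<in>{J*n..<J*n+n}. f c) = (\<Sum>L<n. f (n*J+L))" for J
    using sum.shift_bounds_nat_ivl[of f 0 "J*n" n]
    by (simp add: lessThan_atLeast0 mult.commute add.commute)
  then show ?thesis
    by (simp add: sum.nat_group[symmetric])
qed

lemma sum_lessThan_6:
  fixes f :: "nat \<Rightarrow> 'a::comm_monoid_add"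
  shows "(\<Sum>J<6. f J) = f 0 + f 1 + f 2 + f 3 + f 4 + f 5"
  by (simp add: eval_nat_numeral add.assoc)

lemma sum_lessThan_12:
  fixes f :: "nat \<Rightarrow> 'a::comm_monoid_add"
  shows "(\<Sum>k<12. f k) = f 0 + f 1 + f 2 + f 3 + f 4 + f 5 + f 6 + f 7 + f 8 + f 9 + f 10 + f 11"
  by (simp add: eval_nat_numeral add.assoc)

lemma all_lessThan_iff_list_all: "(\<forall>i<n. P i) \<longleftrightarrow> list_all P [0..<n]"
  by (auto simp: list_all_iff)

lemma inj_on_lessThan_if_distinct: "distinct (map f [0..<n]) \<Longrightarrow> inj_on f {..<n}"
  by (simp add: distinct_map lessThan_atLeast0)

definition inner6 :: "cvec \<Rightarrow> cvec \<Rightarrow> complex" where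
  "inner6 x y = (\<Sum>L<6. x (Suc L) * cnj (y (Suc L)))"

lemma catrow_block:
  "h < 2 \<Longrightarrow> J < 6 \<Longrightarrow> catrow x y (6*h+J) = (if h = 0 then x else y) (Suc J)"
  by (auto simp: catrow_def less_2_cases_iff)

lemma catrow_inner: "(\<Sum>c<12. catrow x y c * cnj (catrow x' y' c)) = inner6 x x' + inner6 y y'"
  using sum_lessThan_mult[of "\<lambda>c. catrow x y c * cnj (catrow x' y' c)" 2 6]
  by (simp add: catrow_block inner6_def numeral_2_eq_2)

definition catrows_mat :: "(cvec \<times> cvec) list \<Rightarrow> complex mat" where
  "catrows_mat ps = mat12_of_rows (map (\<lambda>(x, y). catrow x y) ps)"

definition M_pairs :: "(nat \<Rightarrow> cvec) \<Rightarrow> (nat \<Rightarrow> cvec) \<Rightarrow> (cvec \<times> cvec) list" where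
  "M_pairs a b = [(a 1, b 1), (a 2, b 2), (a 3, b 3), (a 4, b 4), (a 5, b 5), (a 6, b 6),
     (a 7, b 7), (a 8, b 8), (a 9, b 9), (a 10, b 10), (a 11, b 11), (a 12, b 12)]"

definition MR_pairs :: "(nat \<Rightarrow> cvec) \<Rightarrow> (nat \<Rightarrow> cvec) \<Rightarrow> (cvec \<times> cvec) list" where
  "MR_pairs a b = [(a 1, a 2), (b 1, b 2), (a 3, a 4), (b 3, b 4), (a 5, a 6), (b 5, b 6),
     (a 7, a 8), (b 7, b 8), (a 9, a 10), (b 9, b 10), (a 11, a 12), (b 11, b 12)]"

definition MG_pairs :: "(nat \<Rightarrow> cvec) \<Rightarrow> (nat \<Rightarrow> cvec) \<Rightarrow> (cvec \<times> cvec) list" where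
  "MG_pairs a b = [(a 1, a 3), (a 2, a 4), (b 1, b 3), (b 2, b 4), (a 5, a 7), (a 6, a 8),
     (b 5, b 7), (b 6, b 8), (a 9, a 11), (a 10, a 12), (b 9, b 11), (b 10, b 12)]"

lemma M_mat_eq: "M_mat a b = catrows_mat (M_pairs a b)"
  by (simp add: M_mat_def catrows_mat_def M_pairs_def upt_rec eval_nat_numeral)

lemma MR_mat_eq: "MR_mat a b = catrows_mat (MR_pairs a b)"
  by (simp add: MR_mat_def catrows_mat_def MR_pairs_def)

lemma MG_mat_eq: "MG_mat a b = catrows_mat (MG_pairs a b)"
  by (simp add: MG_mat_def catrows_mat_def MG_pairs_def)

lemma catrows_mat_carrier: "catrows_mat ps \<in> carrier_mat 12 12"
  by (simp add: catrows_mat_def mat12_of_rows_def)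

lemma MG_mat_carrier: "MG_mat a b \<in> carrier_mat 12 12"
  by (simp add: MG_mat_eq catrows_mat_carrier)

lemma catrows_mat_index:
  "length ps = 12 \<Longrightarrow> i < 12 \<Longrightarrow> c < 12 \<Longrightarrow>
    catrows_mat ps $$ (i, c) = catrow (fst (ps ! i)) (snd (ps ! i)) c"
  by (simp add: catrows_mat_def mat12_of_rows_def case_prod_beta)

lemma catrows_mat_mult_adj:
  assumes "length ps = 12" "i < 12" "j < 12"
  shows "(catrows_mat ps * adj (catrows_mat ps)) $$ (i, j) =
    inner6 (fst (ps ! i)) (fst (ps ! j)) + inner6 (snd (ps ! i)) (snd (ps ! j))"
  using assms by (simp add: mult_adj_index[OF catrows_mat_carrier] catrows_mat_index catrow_inner)

text \<open>A row of length 36 is viewed as six column blocks of length 6; \<open>block_pair t x y\<close> is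
  the row carrying \<open>x\<close> and \<open>y\<close> in blocks \<open>2t\<close> and \<open>2t + 1\<close> (0-based).\<close>

definition block_pair :: "nat \<Rightarrow> cvec \<Rightarrow> cvec \<Rightarrow> nat \<Rightarrow> cvec" where
  "block_pair t x y K = (if K div 2 = t then if even K then x else y else (\<lambda>_. 0))"

lemma block_pair_products:
  assumes "t < 3" "t' < 3"
  shows "(\<Sum>K<6. block_pair t x y K j * cnj (block_pair t' x' y' K j')) =
    (if t = t' then x j * cnj (x' j') + y j * cnj (y' j') else 0)"
proof -
  have "t = 0 \<or> t = 1 \<or> t = 2" "t' = 0 \<or> t' = 1 \<or> t' = 2" using assms by auto
  then show ?thesis unfolding sum_lessThan_6 by (elim disjE; simp add: block_pair_def)
qed

lemma block_pair_inner:
  assumes "t < 3" "t' < 3"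
  shows "(\<Sum>K<6. inner6 (block_pair t x y K) (block_pair t' x' y' K)) =
    (if t = t' then inner6 x x' + inner6 y y' else 0)"
  unfolding inner6_def sum.swap[of _ "{..<6}"] block_pair_products[OF assms]
  by (simp add: sum.distrib)

lemma block_pair_rows_mult_adj:
  assumes A: "A \<in> carrier_mat 36 36"
    and rows: "\<And>r K L. r < 36 \<Longrightarrow> K < 6 \<Longrightarrow> L < 6 \<Longrightarrow>
      A $$ (r, 6*K+L) = block_pair (t r) (x r) (y r) K (Suc L)"
    and t: "\<And>r. r < 36 \<Longrightarrow> t r < 3"
    and rs: "r < 36" "s < 36"
  shows "(A * adj A) $$ (r, s) =
    (if t r = t s then inner6 (x r) (x s) + inner6 (y r) (y s) else 0)"
proof -
  have "(A * adj A) $$ (r, s) =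
      (\<Sum>K<6. inner6 (block_pair (t r) (x r) (y r) K) (block_pair (t s) (x s) (y s) K))"
    using sum_lessThan_mult[of "\<lambda>c. A $$ (r, c) * cnj (A $$ (s, c))" 6 6]
    by (simp add: mult_adj_index[OF A rs] rows rs inner6_def)
  then show ?thesis using block_pair_inner t rs by simp
qed

lemma block_pair_rows_unitary:
  assumes A: "A \<in> carrier_mat 36 36"
    and B: "unitary_mat 12 (catrows_mat ps)" "length ps = 12"
    and rows: "\<And>r K L. r < 36 \<Longrightarrow> K < 6 \<Longrightarrow> L < 6 \<Longrightarrow>
      A $$ (r, 6*K+L) = block_pair (t r) (fst (ps ! \<sigma> r)) (snd (ps ! \<sigma> r)) K (Suc L)"
    and t: "\<And>r. r < 36 \<Longrightarrow> t r < 3"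
    and \<sigma>: "\<And>r. r < 36 \<Longrightarrow> \<sigma> r < 12"
    and inj: "inj_on (\<lambda>r. (t r, \<sigma> r)) {..<36}"
  shows "unitary_mat 36 A"
proof (rule unitary_mat_of_gram_pullback[OF A _ \<sigma> inj])
  show "(A * adj A) $$ (r, s) = (if t r = t s
      then (catrows_mat ps * adj (catrows_mat ps)) $$ (\<sigma> r, \<sigma> s) else 0)"
    if "r < 36" "s < 36" for r s
    using block_pair_rows_mult_adj[OF A rows t that] catrows_mat_mult_adj[OF B(2) \<sigma> \<sigma>] that
    by simp
qed (use unitary_mat_mult_adj[OF B(1)] in auto)

section \<open>The block structure of \<open>U\<close>\<close>

text \<open>Row \<open>r\<close> of \<open>U\<close> is row \<open>U_idx ! r\<close> of \<open>M\<close> placed in the block pair \<open>U_pair ! r\<close>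
  (both 0-based).\<close>

definition U_pair :: "nat list" where
  "U_pair = [0,0,1,1,2,2, 0,0,1,1,2,2, 2,2,0,0,1,1, 2,2,0,0,1,1, 1,1,2,2,0,0, 1,1,2,2,0,0]"

definition U_idx :: "nat list" where
  "U_idx = [0,1,8,9,4,5, 2,3,10,11,6,7, 8,9,4,5,0,1, 10,11,6,7,2,3, 4,5,0,1,8,9, 6,7,2,3,10,11]"

definition U_blocks :: "(nat \<Rightarrow> cvec) \<Rightarrow> (nat \<Rightarrow> cvec) \<Rightarrow> nat \<Rightarrow> nat \<Rightarrow> cvec" where
  "U_blocks a b r =
    block_pair (U_pair ! r) (fst (M_pairs a b ! (U_idx ! r))) (snd (M_pairs a b ! (U_idx ! r)))"

lemma U_rows_nth:
  assumes "r < 36"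
  shows "U_rows a b ! r =
    (2 * U_pair ! r + 1, fst (M_pairs a b ! (U_idx ! r)), snd (M_pairs a b ! (U_idx ! r)))"
proof -
  have "\<forall>r<36. U_rows a b ! r =
      (2 * U_pair ! r + 1, fst (M_pairs a b ! (U_idx ! r)), snd (M_pairs a b ! (U_idx ! r)))"
    unfolding all_lessThan_iff_list_all
    by (simp add: upt_rec U_rows_def Let_def shiftC_def shiftE_def U_pair_def U_idx_def M_pairs_def)
  then show ?thesis using assms by blast
qed

lemma U_mat_carrier: "U_mat a b \<in> carrier_mat 36 36"
  by (simp add: U_mat_def)

lemma U_mat_index:
  assumes "r < 36" "K < 6" "L < 6"
  shows "U_mat a b $$ (r, 6*K+L) = U_blocks a b r K (Suc L)"
proof -
  define t where "t = U_pair ! r"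
  have divmod: "(6*K+L) div 6 = K" "(6*K+L) mod 6 = L" using assms(3) by auto
  have "U_mat a b $$ (r, c) =
      (if c div 6 = 2*t then fst (M_pairs a b ! (U_idx ! r)) (Suc (c mod 6))
       else if c div 6 = 2*t+1 then snd (M_pairs a b ! (U_idx ! r)) (Suc (c mod 6)) else 0)"
    if "c < 36" for c
    using assms(1) that by (simp add: U_mat_def U_rows_nth t_def case_prod_beta)
  from this[of "6*K+L"] assms
  have "U_mat a b $$ (r, 6*K+L) = (if K = 2*t then fst (M_pairs a b ! (U_idx ! r)) (Suc L)
      else if K = 2*t+1 then snd (M_pairs a b ! (U_idx ! r)) (Suc L) else 0)"
    unfolding divmod by simp
  moreover have "K div 2 = t \<and> even K \<longleftrightarrow> K = 2*t" "K div 2 = t \<and> odd K \<longleftrightarrow> K = 2*t+1"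
    by presburger+
  ultimately show ?thesis by (auto simp: U_blocks_def block_pair_def t_def)
qed

lemma U_pair_less: "r < 36 \<Longrightarrow> U_pair ! r < 3"
  using nth_mem[of r U_pair] by (auto simp: U_pair_def)

lemma U_idx_less: "r < 36 \<Longrightarrow> U_idx ! r < 12"
  using nth_mem[of r U_idx] by (auto simp: U_idx_def)

lemma inj_on_U_pair_U_idx: "inj_on (\<lambda>r. (U_pair ! r, U_idx ! r)) {..<36}"
  by (rule inj_on_lessThan_if_distinct) (simp add: upt_rec U_pair_def U_idx_def)

lemma U_mat_unitary:
  assumes "unitary_mat 12 (M_mat a b)"
  shows "unitary_mat 36 (U_mat a b)"
  using assms unfolding M_mat_eq
  by (intro block_pair_rows_unitary[OF U_mat_carrier _ _ _ U_pair_less U_idx_less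
        inj_on_U_pair_U_idx])
    (auto simp: U_mat_index U_blocks_def M_pairs_def)

section \<open>The reshuffling of \<open>U\<close>\<close>

text \<open>Row \<open>r\<close> of \<open>U\<^sup>R\<close> is row \<open>UR_idx ! r\<close> of \<open>M\<^sub>R\<close> placed in the block pair
  \<open>UR_pair ! r\<close>.\<close>

definition UR_pair :: "nat list" where
  "UR_pair = [0,0,1,1,2,2, 0,0,1,1,2,2, 1,1,2,2,0,0, 1,1,2,2,0,0, 2,2,0,0,1,1, 2,2,0,0,1,1]"

definition UR_idx :: "nat list" where
  "UR_idx = [0,1,8,9,4,5, 2,3,10,11,6,7, 4,5,0,1,8,9, 6,7,2,3,10,11, 8,9,4,5,0,1, 10,11,6,7,2,3]"

definition UR_blocks :: "(nat \<Rightarrow> cvec) \<Rightarrow> (nat \<Rightarrow> cvec) \<Rightarrow> nat \<Rightarrow> nat \<Rightarrow> cvec" where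
  "UR_blocks a b r =
    block_pair (UR_pair ! r) (fst (MR_pairs a b ! (UR_idx ! r))) (snd (MR_pairs a b ! (UR_idx ! r)))"

lemma U_blocks_reshuffle:
  assumes "I < 6" "J < 6" "K < 6"
  shows "U_blocks a b (6*I+K) J = UR_blocks a b (6*I+J) K"
proof -
  have "\<forall>I<6. \<forall>J<6. \<forall>K<6. U_blocks a b (6*I+K) J = UR_blocks a b (6*I+J) K"
    unfolding all_lessThan_iff_list_all
    by (simp add: upt_rec U_blocks_def UR_blocks_def block_pair_def U_pair_def U_idx_def
        UR_pair_def UR_idx_def M_pairs_def MR_pairs_def)
  then show ?thesis using assms by blast
qed

lemma reshuffle_carrier: "reshuffle A \<in> carrier_mat 36 36"
  by (simp add: reshuffle_def)

lemma reshuffle_U_mat_index: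
  assumes "r < 36" "K < 6" "L < 6"
  shows "reshuffle (U_mat a b) $$ (r, 6*K+L) = UR_blocks a b r K (Suc L)"
proof -
  have "r div 6 < 6" "r mod 6 < 6" using assms(1) by auto
  then have "6*K+L < 36" "6*(r div 6) + K < 36" "6*(r mod 6) + L < 36" using assms by linarith+
  then have "reshuffle (U_mat a b) $$ (r, 6*K+L) =
      U_blocks a b (6*(r div 6) + K) (r mod 6) (Suc L)"
    using assms by (simp add: reshuffle_def U_mat_index)
  also have "\<dots> = UR_blocks a b r K (Suc L)"
    using U_blocks_reshuffle[of "r div 6" "r mod 6" K] assms by simp
  finally show ?thesis .
qed

lemma UR_pair_less: "r < 36 \<Longrightarrow> UR_pair ! r < 3"
  using nth_mem[of r UR_pair] by (auto simp: UR_pair_def)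

lemma UR_idx_less: "r < 36 \<Longrightarrow> UR_idx ! r < 12"
  using nth_mem[of r UR_idx] by (auto simp: UR_idx_def)

lemma inj_on_UR_pair_UR_idx: "inj_on (\<lambda>r. (UR_pair ! r, UR_idx ! r)) {..<36}"
  by (rule inj_on_lessThan_if_distinct) (simp add: upt_rec UR_pair_def UR_idx_def)

lemma reshuffle_U_mat_unitary:
  assumes "unitary_mat 12 (MR_mat a b)"
  shows "unitary_mat 36 (reshuffle (U_mat a b))"
  using assms unfolding MR_mat_eq
  by (intro block_pair_rows_unitary[OF reshuffle_carrier _ _ _ UR_pair_less UR_idx_less
        inj_on_UR_pair_UR_idx])
    (auto simp: reshuffle_U_mat_index UR_blocks_def MR_pairs_def)

section \<open>The partial transpose of \<open>U\<close>\<close>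

lemma partial_transpose_carrier: "partial_transpose A \<in> carrier_mat 36 36"
  by (simp add: partial_transpose_def)

lemma partial_transpose_U_mat_index:
  assumes "r < 36" "K < 6" "L < 6"
  shows "partial_transpose (U_mat a b) $$ (r, 6*K+L) =
    U_blocks a b (6*(r div 6) + L) K (Suc (r mod 6))"
proof -
  have "r div 6 < 6" "r mod 6 < 6" using assms(1) by auto
  moreover have "6*K+L < 36" "(6*K+L) div 6 = K" "(6*K+L) mod 6 = L" using assms by auto
  ultimately have "partial_transpose (U_mat a b) $$ (r, 6*K+L) =
      U_mat a b $$ (6*(r div 6) + L, 6*K + r mod 6)"
    using assms by (simp add: partial_transpose_def)
  also have "\<dots> = U_blocks a b (6*(r div 6) + L) K (Suc (r mod 6))"
    using \<open>r div 6 < 6\<close> \<open>r mod 6 < 6\<close> assms by (intro U_mat_index) linarith+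
  finally show ?thesis .
qed

text \<open>The rows \<open>6I, \<dots>, 6I + 5\<close> and \<open>6I', \<dots>, 6I' + 5\<close> of \<open>U\<close> lie in matching block pairs
  iff \<open>I div 2 = I' div 2\<close>, and then the vectors they carry are the columns of \<open>M\<^sub>\<Gamma>\<close>.\<close>

lemma U_blocks_column_sums:
  assumes "I < 6" "I' < 6"
  shows "(\<Sum>L<6. \<Sum>K<6. U_blocks a b (6*I+L) K j * cnj (U_blocks a b (6*I'+L) K j')) =
    (if I div 2 = I' div 2
     then \<Sum>k<12. cnj ((if I' mod 2 = 0 then fst else snd) (MG_pairs a b ! k) j') *
                  (if I mod 2 = 0 then fst else snd) (MG_pairs a b ! k) j
     else 0)"
proof -
  let ?x = "\<lambda>r. fst (M_pairs a b ! (U_idx ! r))"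
    and ?y = "\<lambda>r. snd (M_pairs a b ! (U_idx ! r))"
  have "(\<Sum>L<6. \<Sum>K<6. U_blocks a b (6*I+L) K j * cnj (U_blocks a b (6*I'+L) K j')) =
      (\<Sum>L<6. if U_pair ! (6*I+L) = U_pair ! (6*I'+L)
         then ?x (6*I+L) j * cnj (?x (6*I'+L) j') + ?y (6*I+L) j * cnj (?y (6*I'+L) j') else 0)"
    using assms
    by (intro sum.cong refl, unfold U_blocks_def, intro block_pair_products U_pair_less) auto
  moreover have "\<forall>I<6. \<forall>I'<6. (\<Sum>L<6. if U_pair ! (6*I+L) = U_pair ! (6*I'+L)
         then ?x (6*I+L) j * cnj (?x (6*I'+L) j') + ?y (6*I+L) j * cnj (?y (6*I'+L) j') else 0) =
      (if I div 2 = I' div 2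
       then \<Sum>k<12. cnj ((if I' mod 2 = 0 then fst else snd) (MG_pairs a b ! k) j') *
                    (if I mod 2 = 0 then fst else snd) (MG_pairs a b ! k) j
       else 0)"
    unfolding all_lessThan_iff_list_all
    by (simp add: upt_rec sum_lessThan_6 sum_lessThan_12 U_pair_def U_idx_def M_pairs_def
        MG_pairs_def algebra_simps)
  ultimately show ?thesis using assms by simp
qed

lemma MG_mat_column:
  assumes "k < 12" "r < 36"
  shows "MG_mat a b $$ (k, r mod 12) =
    (if r div 6 mod 2 = 0 then fst else snd) (MG_pairs a b ! k) (Suc (r mod 6))"
proof -
  have "r mod 12 = 6 * (r div 6 mod 2) + r mod 6"
    using mod_mult2_eq[of r 6 2] by simp
  then show ?thesis
    using assms by (simp add: MG_mat_eq catrows_mat_index catrow_block MG_pairs_def)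
qed

lemma partial_transpose_U_mat_mult_adj:
  assumes r: "r < 36" and s: "s < 36"
  shows "(partial_transpose (U_mat a b) * adj (partial_transpose (U_mat a b))) $$ (r, s) =
    (if r div 12 = s div 12 then (adj (MG_mat a b) * MG_mat a b) $$ (s mod 12, r mod 12) else 0)"
proof -
  let ?P = "partial_transpose (U_mat a b)"
  have "(?P * adj ?P) $$ (r, s) = (\<Sum>K<6. \<Sum>L<6. ?P $$ (r, 6*K+L) * cnj (?P $$ (s, 6*K+L)))"
    using sum_lessThan_mult[of "\<lambda>c. ?P $$ (r, c) * cnj (?P $$ (s, c))" 6 6]
    by (simp add: mult_adj_index[OF partial_transpose_carrier r s])
  also have "\<dots> = (\<Sum>L<6. \<Sum>K<6. U_blocks a b (6*(r div 6) + L) K (Suc (r mod 6)) *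
      cnj (U_blocks a b (6*(s div 6) + L) K (Suc (s mod 6))))"
    by (subst sum.swap) (simp add: partial_transpose_U_mat_index r s)
  also have "\<dots> = (if r div 12 = s div 12
      then (adj (MG_mat a b) * MG_mat a b) $$ (s mod 12, r mod 12) else 0)"
    using U_blocks_column_sums[of "r div 6" "s div 6"] r s div_mult2_eq[of _ 6 2]
    by (simp add: adj_mult_index[OF MG_mat_carrier] MG_mat_column)
  finally show ?thesis .
qed

lemma partial_transpose_U_mat_unitary:
  assumes "unitary_mat 12 (MG_mat a b)"
  shows "unitary_mat 36 (partial_transpose (U_mat a b))"
proof (rule unitary_mat_of_gram_pullback[OF partial_transpose_carrier,
    where m = 12 and \<tau> = "\<lambda>r. r div 12" and \<sigma> = "\<lambda>r. r mod 12"
      and G = "\<lambda>i j. (adj (MG_mat a b) * MG_mat a b) $$ (j, i)"])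
  show "(adj (MG_mat a b) * MG_mat a b) $$ (j, i) = (if i = j then 1 else 0)"
    if "i < 12" "j < 12" for i j
    using unitary_mat_adj_mult[OF assms that(2,1)] by simp
  show "inj_on (\<lambda>r. (r div 12, r mod 12)) {..<36::nat}"
    by (rule inj_onI) (metis div_mult_mod_eq prod.inject)
qed (simp_all add: partial_transpose_U_mat_mult_adj)

theorem mainTheorem14:
  fixes a b :: "nat \<Rightarrow> nat \<Rightarrow> complex"
  assumes "unitary_mat 12 (M_mat a b)"
    and "unitary_mat 12 (MR_mat a b)"
    and "unitary_mat 12 (MG_mat a b)"
  shows "multiunitary36 (U_mat a b)"
  unfolding multiunitary36_def
  using U_mat_unitary[OF assms(1)] reshuffle_U_mat_unitary[OF assms(2)]
    partial_transpose_U_mat_unitary[OF assms(3)]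
  by blast

end
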